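(* Let $\pi^{(d)}$ be $\tau^{(d)}$ with $d\ge6$ or $\sigma^{(d)}$ with $d\ge8$, and write $Q=Q_{\pi^{(d)}}$, $\Omega=\Omega_{\pi^{(d)}}$. Then $\{\overline{e}_\alpha\}_{\alpha\in\mathcal{A}}^{Q}=\mathrm{NS}(Q)\setminus\ker\overline{\Omega}$.
   Context: Alphabet $\mathcal{A}=\{1,\dots,d\}$; $\tau^{(d)}$ has top row $1,2,\dots,d$ and bottom row $d,d-1,\dots,6,3,2,5,4,1$; $\sigma^{(d)}$ has top row $1,\dots,d$ and bottom row $d,d-1,\dots,8,3,2,7,6,5,4,1$ (rows list letters in order of $\pi_{\mathrm t}$, $\pi_{\mathrm b}$). $(\Omega_\pi)_{\alpha\beta}=+1$ if $\pi_{\mathrm t}(\alpha)<\pi_{\mathrm t}(\beta)$ and $\pi_{\mathrm b}(\alpha)>\pi_{\mathrm b}(\beta)$, $-1$ if the reverse inequalities hold, $0$ otherwise. Bar denotes reduction mod 2; $\langle u,v\rangle=u\overline{\Omega}v^{\intercal}$ on $(\mathbb{Z}/2\mathbb{Z})^{\mathcal{A}}$ and $\ker\overline{\Omega}=\{u:\langle u,v\rangle=0\ \forall v\}$. $Q_\pi(u)=\sum_{\pi_{\mathrm t}(\alpha)<\pi_{\mathrm t}(\beta)}u_\alpha(\Omega_\pi)_{\alpha\beta}u_\beta+\sum_\alpha u_\alpha\bmod2$. $\mathrm{NS}(Q)=\{u:Q(u)=1\}$ (non-singular vectors). A set $X\subseteq\mathrm{NS}(Q)$ is $Q$-closed if $v,w\in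 X$ and $Q(v+w)=1$ imply $v+w\in X$; $Y^{Q}$ is the smallest $Q$-closed set containing $Y\subseteq\mathrm{NS}(Q)$. *)

theory Defs
  imports Main
begin

text \<open>Alphabet A = {1..d}. A (two-row) permutation is a pair of lists
  (top row, bottom row), each listing the letters in order of pi_t resp. pi_b.
  Positions are 0-based; only comparisons of positions matter.\<close>

type_synonym perm2 = "nat list \<times> nat list"

definition pos :: "nat list \<Rightarrow> nat \<Rightarrow> nat" where
  "pos xs a = (THE i. i < length xs \<and> xs ! i = a)"

definition pit :: "perm2 \<Rightarrow> nat \<Rightarrow> nat" where
  "pit p a = pos (fst p) a"

definition pib :: "perm2 \<Rightarrow> nat \<Rightarrow> nat" where
  "pib p a = pos (snd p) a"

definition tau :: "nat \<Rightarrow> perm2" where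
  "tau d = ([1..<d+1], rev [6..<d+1] @ [3,2,5,4,1])"

definition sigma :: "nat \<Rightarrow> perm2" where
  "sigma d = ([1..<d+1], rev [8..<d+1] @ [3,2,7,6,5,4,1])"

definition Omega :: "perm2 \<Rightarrow> nat \<Rightarrow> nat \<Rightarrow> int" where
  "Omega p a b =
     (if pit p a < pit p b \<and> pib p a > pib p b then 1
      else if pit p a > pit p b \<and> pib p a < pib p b then -1 else 0)"

text \<open>Vectors in (Z/2Z)^A: boolean functions supported in {1..d}.\<close>

definition vecs :: "nat \<Rightarrow> (nat \<Rightarrow> bool) set" where
  "vecs d = {u. \<forall>a. u a \<longrightarrow> a \<in> {1..d}}"

definition vadd :: "(nat \<Rightarrow> bool) \<Rightarrow> (nat \<Rightarrow> bool) \<Rightarrow> nat \<Rightarrow> bool" where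
  "vadd u v = (\<lambda>a. u a \<noteq> v a)"

definition evec :: "nat \<Rightarrow> nat \<Rightarrow> bool" where
  "evec a = (\<lambda>b. b = a)"

text \<open>The form <u,v> = u Omega-bar v^T (True means 1 mod 2).\<close>
definition form :: "nat \<Rightarrow> perm2 \<Rightarrow> (nat \<Rightarrow> bool) \<Rightarrow> (nat \<Rightarrow> bool) \<Rightarrow> bool" where
  "form d p u v =
     odd (\<Sum>a\<in>{1..d}. \<Sum>b\<in>{1..d}. of_bool (u a) * Omega p a b * of_bool (v b))"

definition kerO :: "nat \<Rightarrow> perm2 \<Rightarrow> (nat \<Rightarrow> bool) set" where
  "kerO d p = {u \<in> vecs d. \<forall>v \<in> vecs d. \<not> form d p u v}"

definition Qf :: "nat \<Rightarrow> perm2 \<Rightarrow> (nat \<Rightarrow> bool) \<Rightarrow> bool" where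
  "Qf d p u =
     odd ((\<Sum>a\<in>{1..d}. \<Sum>b\<in>{1..d}.
             if pit p a < pit p b then of_bool (u a) * Omega p a b * of_bool (u b) else 0)
          + (\<Sum>a\<in>{1..d}. of_bool (u a) :: int))"

definition NS :: "nat \<Rightarrow> perm2 \<Rightarrow> (nat \<Rightarrow> bool) set" where
  "NS d p = {u \<in> vecs d. Qf d p u}"

definition Qclosed :: "nat \<Rightarrow> perm2 \<Rightarrow> (nat \<Rightarrow> bool) set \<Rightarrow> bool" where
  "Qclosed d p X \<longleftrightarrow> X \<subseteq> NS d p \<and>
     (\<forall>v\<in>X. \<forall>w\<in>X. Qf d p (vadd v w) \<longrightarrow> vadd v w \<in> X)"

definition Qclosure :: "nat \<Rightarrow> perm2 \<Rightarrow> (nat \<Rightarrow> bool) set \<Rightarrow> (nat \<Rightarrow> bool) set" where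
  "Qclosure d p Y = \<Inter> {X. Qclosed d p X \<and> Y \<subseteq> X}"

end

theory Submission
  imports Defs
begin

(* Write <u,v> for the bilinear form of Omega mod 2. Expanding Q on a sum gives
   Q(u + v) = Q(u) + Q(v) + <u,v>, and <u,u> = 0. So if v, w are non-singular, lie outside the
   kernel and Q(v + w) = 1, then <v,w> = 1 and hence <v + w, w> = 1: the set NS(Q) - ker is
   Q-closed, and as it contains every basis vector it contains their closure.

   Conversely, identify a vector with its support U. For both permutations <e_a,e_b> = 1 for all
   letters a and b except for a = b and for the pairs in {2,3} x R (in either order), where
   R = {4,5} resp. {4,...,7}; hence <U,e_b> and Q(U) are explicit parities of |U|, |U n {2,3}|
   and |U n R|. If Q(U) = 1 and <U,e_b> = 1, then U + e_b is again non-singular with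
   <U + e_b, e_b> = 1, and U lies in the closure as soon as U + e_b does. A case analysis yields
   for every non-singular U outside the kernel such a chain of flips that lowers |U| plus the
   number of letters of U outside {2,3} u R, unless U is a single letter or consists of one
   letter of {2,3} and three of R. The latter sets occur only for sigma, and explicit chains
   through the letters 1 and 8 reduce them to e_8. *)

lemma pos_eqI: "distinct xs \<Longrightarrow> i < length xs \<Longrightarrow> xs ! i = a \<Longrightarrow> pos xs a = i"
  unfolding pos_def by (rule the_equality) (auto simp: nth_eq_iff_index_eq)

lemma pos_append_left:
  assumes "distinct (xs @ ys)" "a \<in> set xs"
  shows "pos (xs @ ys) a = pos xs a"
proof -
  obtain i where "i < length xs" "xs ! i = a" using assms(2) by (auto simp: in_set_conv_nth)
  then show ?thesis using assms(1) by (simp add: pos_eqI nth_append)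
qed

lemma pos_append_right:
  assumes "distinct (xs @ ys)" "a \<in> set ys"
  shows "pos (xs @ ys) a = length xs + pos ys a"
proof -
  obtain i where "i < length ys" "ys ! i = a" using assms(2) by (auto simp: in_set_conv_nth)
  then show ?thesis using assms(1) by (simp add: pos_eqI nth_append)
qed

lemma pos_Cons:
  "distinct (x # xs) \<Longrightarrow> a \<in> set (x # xs) \<Longrightarrow> pos (x # xs) a = (if a = x then 0 else Suc (pos xs a))"
  using pos_append_right[of "[x]" xs a] by (auto intro: pos_eqI)

lemma pos_upt: "i \<le> a \<Longrightarrow> a < j \<Longrightarrow> pos [i..<j] a = a - i"
  by (rule pos_eqI) auto

lemma pos_rev_upt: "i \<le> a \<Longrightarrow> a < j \<Longrightarrow> pos (rev [i..<j]) a = j - Suc a"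
  by (rule pos_eqI) (auto simp: rev_nth)

definition twist_perm :: "nat \<Rightarrow> nat \<Rightarrow> perm2" where
  "twist_perm d k = ([1..<d+1], rev [k..<d+1] @ [3,2] @ rev [4..<k] @ [1])"

lemma pit_twist_perm: "a \<in> {1..d} \<Longrightarrow> pit (twist_perm d k) a = a - 1"
  unfolding pit_def twist_perm_def by (simp add: pos_upt del: upt_Suc)

lemma pib_twist_perm:
  assumes "4 \<le> k" "k \<le> d" "a \<in> {1..d}"
  shows "pib (twist_perm d k) a =
    (if a \<in> {2,3} then d + 4 - k - a else if 4 \<le> a \<and> a < k then d + 2 - a else d - a)"
proof -
  let ?xs = "rev [k..<d+1]" and ?ys = "[3,2] @ rev [4..<k] @ [1]"
  have dist: "distinct (?xs @ ?ys)" using assms(1) by (auto simp del: upt_Suc)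
  have len: "length ?xs = d + 1 - k" by (simp del: upt_Suc)
  have "pos (?xs @ ?ys) a = (if a \<in> {2,3} then d + 4 - k - a else if 4 \<le> a \<and> a < k then d + 2 - a else d - a)"
  proof (cases "k \<le> a")
    case True
    then have "a \<in> set ?xs" using assms by (simp del: upt_Suc)
    then have "pos (?xs @ ?ys) a = pos ?xs a" by (rule pos_append_left[OF dist])
    also have "\<dots> = d - a" using True assms by (simp add: pos_rev_upt del: upt_Suc)
    finally show ?thesis using True assms by simp
  next
    case False
    then have "a \<in> set ?ys" using assms by auto
    have "pos ?ys a = (if a \<in> {2,3} then 3 - a else if 4 \<le> a then k + 1 - a else k - 2)"
      using False assms dist
      by (auto simp: pos_Cons pos_append_left pos_append_right pos_rev_upt pos_eqI)
    moreover note pos_append_right[OF dist \<open>a \<in> set ?ys\<close>]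
    ultimately show ?thesis using False assms len by (auto simp del: upt_Suc)
  qed
  then show ?thesis unfolding pib_def twist_perm_def by simp
qed

definition twisted :: "nat \<Rightarrow> perm2 \<Rightarrow> nat set \<Rightarrow> bool" where
  "twisted d p R \<longleftrightarrow> R \<subseteq> {4..d} \<and>
     (\<forall>a\<in>{1..d}. \<forall>b\<in>{1..d}. pit p a < pit p b \<longleftrightarrow> a < b) \<and>
     (\<forall>a\<in>{1..d}. \<forall>b\<in>{1..d}. a < b \<longrightarrow> (pib p b < pib p a \<longleftrightarrow> \<not> (a \<in> {2,3} \<and> b \<in> R)))"

lemma twisted_twist_perm:
  assumes "4 \<le> k" "k \<le> d"
  shows "twisted d (twist_perm d k) {4..<k}"
  unfolding twisted_def using assms
  by (auto simp: pit_twist_perm pib_twist_perm)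

lemma tau_eq_twist_perm: "tau d = twist_perm d 6"
  by (simp add: tau_def twist_perm_def upt_rec[of 4] upt_rec[of 5] upt_rec[of 6])

lemma sigma_eq_twist_perm: "sigma d = twist_perm d 8"
  by (simp add: sigma_def twist_perm_def upt_rec[of 4] upt_rec[of 5] upt_rec[of 6] upt_rec[of 7] upt_rec[of 8])

lemma Omega_swap: "Omega p b a = - Omega p a b"
  unfolding Omega_def by auto

lemma form_iff_row_sums:
  "form d p u w \<longleftrightarrow> odd (\<Sum>a\<in>{1..d}. of_bool (u a) * (\<Sum>b\<in>{1..d}. Omega p a b * of_bool (w b)))"
  unfolding form_def by (simp only: sum_distrib_left mult.assoc)

lemma form_vadd_left: "form d p (vadd u v) w \<longleftrightarrow> form d p u w \<noteq> form d p v w"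
proof -
  define r where "r a = (\<Sum>b\<in>{1..d}. Omega p a b * of_bool (w b) :: int)" for a
  have "of_bool (vadd u v a) * r a = of_bool (u a) * r a + of_bool (v a) * r a - 2 * (of_bool (u a \<and> v a) * r a)"
    for a by (simp add: vadd_def)
  then have "(\<Sum>a\<in>{1..d}. of_bool (vadd u v a) * r a) = (\<Sum>a\<in>{1..d}. of_bool (u a) * r a)
      + (\<Sum>a\<in>{1..d}. of_bool (v a) * r a) - 2 * (\<Sum>a\<in>{1..d}. of_bool (u a \<and> v a) * r a)"
    by (simp only: sum.distrib sum_subtractf sum_distrib_left)
  then show ?thesis unfolding form_iff_row_sums r_def[symmetric] by simp
qed

lemma form_self: "\<not> form d p u u"
proof -
  define f where "f a b = (of_bool (u a) * Omega p a b * of_bool (u b) :: int)" for a b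
  define S where "S = (\<Sum>a\<in>{1..d}. \<Sum>b\<in>{1..d}. f a b)"
  have anti: "f a b = - f b a" for a b
    unfolding f_def using Omega_swap[of p a b] by simp
  have "S = (\<Sum>b\<in>{1..d}. \<Sum>a\<in>{1..d}. f a b)"
    unfolding S_def by (rule sum.swap)
  also have "\<dots> = (\<Sum>b\<in>{1..d}. \<Sum>a\<in>{1..d}. - f b a)"
    by (rule sum.cong[OF refl], rule sum.cong[OF refl], rule anti)
  also have "\<dots> = - S"
    unfolding S_def by (simp only: sum_negf)
  finally show ?thesis unfolding form_def f_def[symmetric] S_def[symmetric] by simp
qed

lemma Qf_vadd: "Qf d p (vadd u v) \<longleftrightarrow> (Qf d p u \<noteq> Qf d p v) \<noteq> form d p u v"
proof -
  let ?D = "{1..d}"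
  define T where "T a b = (if pit p a < pit p b then Omega p a b else 0)" for a b
  define X where "X u a = (of_bool (u a) :: int)" for u :: "nat \<Rightarrow> bool" and a
  define q where "q u = (\<Sum>a\<in>?D. \<Sum>b\<in>?D. X u a * T a b * X u b)" for u
  define l where "l u = (\<Sum>a\<in>?D. X u a)" for u
  define C where "C u v = (\<Sum>a\<in>?D. \<Sum>b\<in>?D. X u a * T a b * X v b)" for u v
  define W where "W a = X (\<lambda>a. u a \<and> v a) a" for a
  define E where "E = (\<Sum>a\<in>?D. \<Sum>b\<in>?D. T a b * (2 * W a * W b - W a * (X u b + X v b) - (X u a + X v a) * W b))"
  have Qf_eq: "Qf d p w \<longleftrightarrow> odd (q w + l w)" for w
  proof -
    have "(if pit p a < pit p b then X w a * Omega p a b * X w b else 0) = X w a * T a b * X w b" for a b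
      unfolding T_def by simp
    then show ?thesis unfolding Qf_def q_def l_def X_def by simp
  qed
  \<comment> \<open>Omega vanishes where pit p a = pit p b, so it is T minus the transpose of T.\<close>
  have "X u a * Omega p a b * X v b = X u a * T a b * X v b - X v b * T b a * X u a" for a b
    unfolding T_def Omega_def by auto
  moreover have "C v u = (\<Sum>a\<in>?D. \<Sum>b\<in>?D. X v b * T b a * X u a)"
    unfolding C_def by (rule sum.swap)
  ultimately have "(\<Sum>a\<in>?D. \<Sum>b\<in>?D. X u a * Omega p a b * X v b) = C u v - C v u"
    unfolding C_def by (simp only: sum_subtractf)
  then have form_eq: "form d p u v \<longleftrightarrow> odd (C u v - C v u)"
    unfolding form_def X_def by simp
  have X_vadd: "X (vadd u v) a = X u a + X v a - 2 * W a" for a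
    unfolding X_def W_def vadd_def by simp
  have "X (vadd u v) a * T a b * X (vadd u v) b = X u a * T a b * X u b + X v a * T a b * X v b
      + X u a * T a b * X v b + X v a * T a b * X u b
      + 2 * (T a b * (2 * W a * W b - W a * (X u b + X v b) - (X u a + X v a) * W b))" for a b
    unfolding X_vadd by (simp add: algebra_simps)
  then have "q (vadd u v) = q u + q v + C u v + C v u + 2 * E"
    unfolding q_def C_def E_def by (simp only: sum.distrib sum_distrib_left)
  moreover have "l (vadd u v) = l u + l v - 2 * (\<Sum>a\<in>?D. W a)"
    unfolding l_def X_vadd by (simp only: sum.distrib sum_subtractf sum_distrib_left)
  ultimately have "q (vadd u v) + l (vadd u v)
      = (q u + l u) + (q v + l v) + (C u v - C v u) + 2 * (C v u + E - (\<Sum>a\<in>?D. W a))"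
    by simp
  then show ?thesis unfolding Qf_eq form_eq by presburger
qed

lemma form_iff_col_sums:
  "form d p u v \<longleftrightarrow> odd (\<Sum>b\<in>{1..d}. (\<Sum>a\<in>{1..d}. of_bool (u a) * Omega p a b) * of_bool (v b))"
  unfolding form_def sum_distrib_right by (subst sum.swap) (rule refl)

lemma form_evec_right:
  "b \<in> {1..d} \<Longrightarrow> form d p u (evec b) \<longleftrightarrow> odd (\<Sum>a\<in>{1..d}. of_bool (u a) * Omega p a b)"
  unfolding form_iff_col_sums evec_def by (simp add: sum.delta')

lemma form_evec_evec:
  "a \<in> {1..d} \<Longrightarrow> b \<in> {1..d} \<Longrightarrow> form d p (evec a) (evec b) \<longleftrightarrow> odd (Omega p a b)"
  by (simp add: form_evec_right) (simp add: evec_def)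

lemma form_zero_left: "\<not> form d p (\<lambda>_. False) v"
  unfolding form_def by simp

lemma Qf_zero: "\<not> Qf d p (\<lambda>_. False)"
  unfolding Qf_def by (simp cong: if_cong)

lemma Qf_evec:
  assumes "a \<in> {1..d}"
  shows "Qf d p (evec a)"
proof -
  have "(\<Sum>x\<in>{1..d}. \<Sum>y\<in>{1..d}. if pit p x < pit p y
      then of_bool (evec a x) * Omega p x y * of_bool (evec a y) else 0) = (0::int)"
    by (intro sum.neutral ballI) (auto simp: evec_def)
  moreover have "(\<Sum>x\<in>{1..d}. of_bool (evec a x)) = (1::int)"
    using assms by (simp add: evec_def)
  ultimately show ?thesis unfolding Qf_def by simp
qed

lemma kerO_iff_evec:
  "u \<in> kerO d p \<longleftrightarrow> u \<in> vecs d \<and> (\<forall>b\<in>{1..d}. \<not> form d p u (evec b))"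
proof
  assume "u \<in> kerO d p"
  moreover have "evec b \<in> vecs d" if "b \<in> {1..d}" for b
    using that by (simp add: vecs_def evec_def)
  ultimately show "u \<in> vecs d \<and> (\<forall>b\<in>{1..d}. \<not> form d p u (evec b))"
    unfolding kerO_def by blast
next
  assume *: "u \<in> vecs d \<and> (\<forall>b\<in>{1..d}. \<not> form d p u (evec b))"
  have "\<not> form d p u v" for v
  proof -
    have "even ((\<Sum>a\<in>{1..d}. of_bool (u a) * Omega p a b) * of_bool (v b))" if "b \<in> {1..d}" for b
      using * that by (simp add: form_evec_right)
    then have "even (\<Sum>b\<in>{1..d}. (\<Sum>a\<in>{1..d}. of_bool (u a) * Omega p a b) * of_bool (v b))"
      by (rule dvd_sum)
    then show ?thesis unfolding form_iff_col_sums by simp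
  qed
  then show "u \<in> kerO d p" using * unfolding kerO_def by blast
qed

lemma vadd_vecs: "u \<in> vecs d \<Longrightarrow> v \<in> vecs d \<Longrightarrow> vadd u v \<in> vecs d"
  unfolding vecs_def vadd_def by auto

lemma vadd_vadd_cancel: "vadd (vadd u v) v = u"
  unfolding vadd_def by auto

lemma Qclosure_vadd:
  "v \<in> Qclosure d p Y \<Longrightarrow> w \<in> Qclosure d p Y \<Longrightarrow> Qf d p (vadd v w) \<Longrightarrow> vadd v w \<in> Qclosure d p Y"
  unfolding Qclosure_def Qclosed_def by auto

lemma Qclosure_least: "Qclosed d p X \<Longrightarrow> Y \<subseteq> X \<Longrightarrow> Qclosure d p Y \<subseteq> X"
  unfolding Qclosure_def by auto

lemma evec_in_Qclosure: "a \<in> {1..d} \<Longrightarrow> evec a \<in> Qclosure d p (evec ` {1..d})"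
  unfolding Qclosure_def by auto

lemma Qclosed_NS_minus_kerO: "Qclosed d p (NS d p - kerO d p)"
  unfolding Qclosed_def
proof (intro conjI ballI impI)
  fix v w assume v: "v \<in> NS d p - kerO d p" and w: "w \<in> NS d p - kerO d p" and Q: "Qf d p (vadd v w)"
  have vecs: "vadd v w \<in> vecs d" using v w by (simp add: NS_def vadd_vecs)
  have "form d p v w"
    using Q v w Qf_vadd[of d p v w] by (simp add: NS_def)
  then have "form d p (vadd v w) w"
    by (simp add: form_vadd_left form_self)
  then have "vadd v w \<notin> kerO d p"
    using w by (auto simp: kerO_def NS_def)
  then show "vadd v w \<in> NS d p - kerO d p"
    using vecs Q by (simp add: NS_def)
qed auto

lemma Qclosure_subset_NS_minus_kerO:
  assumes "\<forall>a\<in>{1..d}. evec a \<notin> kerO d p"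
  shows "Qclosure d p (evec ` {1..d}) \<subseteq> NS d p - kerO d p"
proof (rule Qclosure_least[OF Qclosed_NS_minus_kerO])
  have "evec a \<in> NS d p" if "a \<in> {1..d}" for a
    using that Qf_evec[OF that] by (simp add: NS_def vecs_def evec_def)
  then show "evec ` {1..d} \<subseteq> NS d p - kerO d p" using assms by auto
qed

definition vec_of :: "nat set \<Rightarrow> nat \<Rightarrow> bool" where
  "vec_of U = (\<lambda>a. a \<in> U)"

lemma vadd_vec_of_evec: "vadd (vec_of U) (evec b) = vec_of (sym_diff U {b})"
  unfolding vadd_def vec_of_def evec_def by auto

lemma vec_of_insert: "b \<notin> U \<Longrightarrow> vec_of (insert b U) = vadd (vec_of U) (evec b)"
  unfolding vadd_def vec_of_def evec_def by auto

lemma flip_invariant: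
  assumes "b \<in> {1..d}" "Qf d p (vec_of U)" "form d p (vec_of U) (evec b)"
  shows "Qf d p (vec_of (sym_diff U {b}))" "form d p (vec_of (sym_diff U {b})) (evec b)"
  using assms Qf_vadd[of d p "vec_of U" "evec b"] form_vadd_left[of d p "vec_of U" "evec b"]
  by (simp_all add: vadd_vec_of_evec Qf_evec form_self)

lemma flip_Qclosure:
  assumes "b \<in> {1..d}" "Qf d p (vec_of U)"
    and "vec_of (sym_diff U {b}) \<in> Qclosure d p (evec ` {1..d})"
  shows "vec_of U \<in> Qclosure d p (evec ` {1..d})"
  using Qclosure_vadd[OF assms(3) evec_in_Qclosure[OF assms(1)]] assms(2)
  by (simp flip: vadd_vec_of_evec add: vadd_vadd_cancel)

fun walk_end :: "nat set \<Rightarrow> nat list \<Rightarrow> nat set" where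
  "walk_end U [] = U"
| "walk_end U (b # bs) = walk_end (sym_diff U {b}) bs"

fun odd_walk :: "nat \<Rightarrow> perm2 \<Rightarrow> nat set \<Rightarrow> nat list \<Rightarrow> bool" where
  "odd_walk d p U [] \<longleftrightarrow> True"
| "odd_walk d p U (b # bs) \<longleftrightarrow>
     b \<in> {1..d} \<and> form d p (vec_of U) (evec b) \<and> odd_walk d p (sym_diff U {b}) bs"

lemma odd_walk_Qclosure:
  "Qf d p (vec_of U) \<Longrightarrow> odd_walk d p U bs \<Longrightarrow> vec_of (walk_end U bs) \<in> Qclosure d p (evec ` {1..d})
    \<Longrightarrow> vec_of U \<in> Qclosure d p (evec ` {1..d})"
proof (induction bs arbitrary: U)
  case (Cons b bs)
  then have b: "b \<in> {1..d}" "form d p (vec_of U) (evec b)" and walk: "odd_walk d p (sym_diff U {b}) bs"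
    by simp_all
  have "Qf d p (vec_of (sym_diff U {b}))" using flip_invariant(1)[OF b(1) Cons.prems(1) b(2)] .
  then have "vec_of (sym_diff U {b}) \<in> Qclosure d p (evec ` {1..d})"
    using Cons.IH walk Cons.prems(3) by simp
  then show ?case using flip_Qclosure[OF b(1) Cons.prems(1)] by blast
qed simp

lemma odd_walk_end:
  "Qf d p (vec_of U) \<Longrightarrow> odd_walk d p U bs \<Longrightarrow> bs \<noteq> [] \<Longrightarrow>
    Qf d p (vec_of (walk_end U bs)) \<and> (\<exists>b\<in>{1..d}. form d p (vec_of (walk_end U bs)) (evec b))"
proof (induction bs arbitrary: U)
  case (Cons b bs)
  then have b: "b \<in> {1..d}" "form d p (vec_of U) (evec b)" and walk: "odd_walk d p (sym_diff U {b}) bs"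
    by simp_all
  note flipped = flip_invariant[OF b(1) Cons.prems(1) b(2)]
  show ?case
  proof (cases "bs = []")
    case True
    then show ?thesis using flipped b(1) by auto
  next
    case False
    then show ?thesis using Cons.IH[OF flipped(1) walk] by simp
  qed
qed simp

lemma walk_end_subset: "U \<subseteq> {1..d} \<Longrightarrow> odd_walk d p U bs \<Longrightarrow> walk_end U bs \<subseteq> {1..d}"
proof (induction bs arbitrary: U)
  case (Cons b bs)
  then have "sym_diff U {b} \<subseteq> {1..d}" "odd_walk d p (sym_diff U {b}) bs" by auto
  then show ?case using Cons.IH by simp
qed simp

lemma odd_walk_reduce:
  assumes "U \<subseteq> {1..d}" "Qf d p (vec_of U)" "odd_walk d p U bs" "bs \<noteq> []"
    and "\<lbrakk>walk_end U bs \<subseteq> {1..d}; Qf d p (vec_of (walk_end U bs));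
          \<exists>b\<in>{1..d}. form d p (vec_of (walk_end U bs)) (evec b)\<rbrakk>
         \<Longrightarrow> vec_of (walk_end U bs) \<in> Qclosure d p (evec ` {1..d})"
  shows "vec_of U \<in> Qclosure d p (evec ` {1..d})"
  using odd_walk_Qclosure[OF assms(2,3)] assms(5) odd_walk_end[OF assms(2-4)]
    walk_end_subset[OF assms(1,3)] by blast

lemma odd_walk_to_singleton:
  assumes "Qf d p (vec_of U)" "odd_walk d p U bs" "walk_end U bs = {b}" "b \<in> {1..d}"
  shows "vec_of U \<in> Qclosure d p (evec ` {1..d})"
proof -
  have "vec_of {b} = evec b" by (auto simp: vec_of_def evec_def)
  then show ?thesis using odd_walk_Qclosure[OF assms(1,2)] evec_in_Qclosure[OF assms(4)] assms(3) by simp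
qed

lemma odd_Omega_twisted:
  assumes "twisted d p R" "a \<in> {1..d}" "b \<in> {1..d}"
  shows "odd (Omega p a b) \<longleftrightarrow> a \<noteq> b \<and> \<not> (a \<in> {2,3} \<and> b \<in> R) \<and> \<not> (a \<in> R \<and> b \<in> {2,3})"
proof -
  have R: "R \<subseteq> {4..d}" and t: "pit p a < pit p b \<longleftrightarrow> a < b" "pit p b < pit p a \<longleftrightarrow> b < a"
    and ab: "a < b \<Longrightarrow> pib p b < pib p a \<longleftrightarrow> \<not> (a \<in> {2,3} \<and> b \<in> R)"
    and ba: "b < a \<Longrightarrow> pib p a < pib p b \<longleftrightarrow> \<not> (b \<in> {2,3} \<and> a \<in> R)"
    using assms unfolding twisted_def by blast+
  consider "a < b" | "a = b" | "b < a" by arith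
  then show ?thesis
  proof cases
    case 1
    then show ?thesis using t ab R by (auto simp: Omega_def)
  next
    case 2
    then show ?thesis by (simp add: Omega_def)
  next
    case 3
    then show ?thesis using t ba R by (auto simp: Omega_def)
  qed
qed

lemma form_vec_of_evec_twisted:
  assumes tw: "twisted d p R" and U: "U \<subseteq> {1..d}" and b: "b \<in> {1..d}"
  shows "form d p (vec_of U) (evec b) \<longleftrightarrow>
    odd (card U + of_bool (b \<in> U) + of_bool (b \<in> R) * card (U \<inter> {2,3})
         + of_bool (b \<in> {2,3}) * card (U \<inter> R))"
proof -
  define P :: "nat set" where "P = {2,3}"
  define col where "col V = card V + of_bool (b \<in> V) + of_bool (b \<in> R) * card (V \<inter> P)
    + of_bool (b \<in> P) * card (V \<inter> R)" for V
  have PR: "P \<inter> R = {}" using tw unfolding twisted_def P_def by auto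
  have "form d p (vec_of U) (evec b) \<longleftrightarrow> odd (col U)"
    using finite_subset[OF U finite_atLeastAtMost] U
  proof (induction U rule: finite_subset_induct)
    case empty
    then show ?case by (simp add: vec_of_def form_zero_left col_def)
  next
    case (insert a F)
    define \<delta> :: nat where "\<delta> = 1 + of_bool (a = b) + of_bool (b \<in> R) * of_bool (a \<in> P)
      + of_bool (b \<in> P) * of_bool (a \<in> R)"
    have "(a \<noteq> b \<and> \<not> (a \<in> P \<and> b \<in> R) \<and> \<not> (a \<in> R \<and> b \<in> P)) \<longleftrightarrow> odd \<delta>"
      using PR unfolding \<delta>_def by auto
    then have "form d p (vec_of (insert a F)) (evec b) \<longleftrightarrow> form d p (vec_of F) (evec b) \<noteq> odd \<delta>"
      using insert b unfolding P_def
      by (simp add: vec_of_insert form_vadd_left form_evec_evec odd_Omega_twisted[OF tw])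
    moreover have "col (insert a F) = col F + \<delta>"
    proof -
      have "card (insert a F) = card F + 1"
        "card (insert a F \<inter> P) = card (F \<inter> P) + of_bool (a \<in> P)"
        "card (insert a F \<inter> R) = card (F \<inter> R) + of_bool (a \<in> R)"
        "of_bool (b \<in> insert a F) = of_bool (b \<in> F) + (of_bool (a = b) :: nat)"
        using insert by auto
      then show ?thesis unfolding col_def \<delta>_def by (simp add: algebra_simps)
    qed
    ultimately show ?case using insert.IH by simp
  qed
  then show ?thesis unfolding col_def P_def .
qed

lemma Qf_vec_of_twisted:
  assumes tw: "twisted d p R" and U: "U \<subseteq> {1..d}"
  shows "Qf d p (vec_of U) \<longleftrightarrow> odd ((Suc (card U) choose 2) + card (U \<inter> {2,3}) * card (U \<inter> R))"
proof -
  define P :: "nat set" where "P = {2,3}"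
  define qv where "qv V = (Suc (card V) choose 2) + card (V \<inter> P) * card (V \<inter> R)" for V
  have PR: "P \<inter> R = {}" using tw unfolding twisted_def P_def by auto
  have "Qf d p (vec_of U) \<longleftrightarrow> odd (qv U)"
    using finite_subset[OF U finite_atLeastAtMost] U
  proof (induction U rule: finite_subset_induct')
    case empty
    then show ?case by (simp add: vec_of_def Qf_zero qv_def numeral_2_eq_2)
  next
    case (insert a F)
    define \<delta> where "\<delta> = card F + of_bool (a \<in> R) * card (F \<inter> P) + of_bool (a \<in> P) * card (F \<inter> R)"
    have "form d p (vec_of F) (evec a) \<longleftrightarrow> odd \<delta>"
      using form_vec_of_evec_twisted[OF tw insert(3,2)] insert(4) unfolding \<delta>_def P_def by simp
    then have "Qf d p (vec_of (insert a F)) \<longleftrightarrow> Qf d p (vec_of F) = odd \<delta>"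
      using insert Qf_vadd[of d p "vec_of F" "evec a"] Qf_evec[of a d p] by (simp add: vec_of_insert)
    moreover have "qv (insert a F) = qv F + Suc \<delta>"
    proof -
      have "card (insert a F) = Suc (card F)"
        "card (insert a F \<inter> P) = card (F \<inter> P) + of_bool (a \<in> P)"
        "card (insert a F \<inter> R) = card (F \<inter> R) + of_bool (a \<in> R)"
        "of_bool (a \<in> P) * of_bool (a \<in> R) = (0::nat)"
        using insert PR by auto
      then show ?thesis unfolding qv_def \<delta>_def by (simp add: algebra_simps numeral_2_eq_2)
    qed
    ultimately show ?case using insert.IH by simp
  qed
  then show ?thesis unfolding qv_def P_def .
qed

(* Every flip chain used below lowers this measure; the second summand counts the letters of U
   outside {2,3} u R. *)
definition weight :: "nat \<Rightarrow> nat set \<Rightarrow> nat set \<Rightarrow> nat" where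
  "weight d R U = card U + card (U \<inter> ({1..d} - {2,3} - R))"

context
  fixes d :: nat and p :: perm2 and R :: "nat set"
  assumes tw: "twisted d p R"
begin

lemma twisted_R: "R \<subseteq> {4..d}"
  using tw unfolding twisted_def by blast

lemma stuck_subset_23R_cases:
  assumes R4: "card R \<le> 4" and U: "U \<subseteq> {1..d}" "U \<subseteq> {2,3} \<union> R" and Q: "Qf d p (vec_of U)"
    and stuck: "\<forall>b\<in>U. \<not> form d p (vec_of U) (evec b)"
  shows "card U = 1 \<or> card (U \<inter> {2,3}) = 1 \<and> card (U \<inter> R) = 3"
proof -
  define x y where "x = card (U \<inter> {2,3})" and "y = card (U \<inter> R)"
  have fin: "finite U" "finite R" using U(1) twisted_R by (auto intro: finite_subset)
  have PR: "{2,3} \<inter> R = {}" using twisted_R by auto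
  have m: "card U = x + y"
  proof -
    have "U = (U \<inter> {2,3}) \<union> (U \<inter> R)" using U(2) by auto
    moreover have "card ((U \<inter> {2,3}) \<union> (U \<inter> R)) = x + y"
      unfolding x_def y_def using fin PR by (intro card_Un_disjoint) auto
    ultimately show ?thesis by simp
  qed
  have col: "form d p (vec_of U) (evec b) \<longleftrightarrow>
      odd (card U + of_bool (b \<in> U) + of_bool (b \<in> R) * x + of_bool (b \<in> {2,3}) * y)" if "b \<in> U" for b
    using form_vec_of_evec_twisted[OF tw U(1)] that U(1) unfolding x_def y_def by blast
  have x_odd: "x = 0 \<or> odd x"
  proof (cases "U \<inter> {2,3} = {}")
    case False
    then obtain b where "b \<in> U" "b \<in> {2,3}" by blast
    then show ?thesis using stuck col[of b] m PR by auto
  qed (simp add: x_def)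
  have y_odd: "y = 0 \<or> odd y"
  proof (cases "U \<inter> R = {}")
    case False
    then obtain b where "b \<in> U" "b \<in> R" by blast
    then show ?thesis using stuck col[of b] m PR by auto
  qed (simp add: y_def)
  have "x \<le> card {2,3::nat}" unfolding x_def by (rule card_mono) auto
  then have "x \<le> 2" by simp
  have "y \<le> 4" unfolding y_def using R4 fin(2) by (meson card_mono inf_le2 le_trans)
  have "odd ((Suc (x + y) choose 2) + x * y)"
    using Qf_vec_of_twisted[OF tw U(1)] Q m unfolding x_def y_def by simp
  moreover have "x \<in> {0,1,2}" "y \<in> {0,1,2,3,4}" using \<open>x \<le> 2\<close> \<open>y \<le> 4\<close> by auto
  ultimately show ?thesis using x_odd y_odd m unfolding x_def[symmetric] y_def[symmetric] by (auto simp: choose_two)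
qed

lemma swap_walk:
  assumes U: "U \<subseteq> {1..d}" "odd (card U)" and c: "c \<in> U" "c \<notin> {2,3} \<union> R"
    and \<pi>: "\<pi> \<in> {1..d}" "\<pi> \<in> {2,3} \<union> R" "\<pi> \<notin> U" "form d p (vec_of U) (evec \<pi>)"
  shows "odd_walk d p U [\<pi>, c] \<and> weight d R (walk_end U [\<pi>, c]) < weight d R U"
proof -
  have fin: "finite U" using U(1) by (rule finite_subset) simp
  have U1: "sym_diff U {\<pi>} = insert \<pi> U" and U2: "sym_diff (insert \<pi> U) {c} = insert \<pi> U - {c}"
    using \<pi>(3) c(1) by auto
  have "form d p (vec_of (insert \<pi> U)) (evec c)"
    using form_vec_of_evec_twisted[OF tw, of "insert \<pi> U" c] U c \<pi> fin by auto
  then have walk: "odd_walk d p U [\<pi>, c]" using \<pi> c U(1) by (auto simp: U1)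
  have "card (insert \<pi> U - {c}) = card U" using fin c(1) \<pi>(3) by simp
  moreover have "(insert \<pi> U - {c}) \<inter> ({1..d} - {2,3} - R) = U \<inter> ({1..d} - {2,3} - R) - {c}"
    using \<pi>(2) by auto
  moreover have "card (U \<inter> ({1..d} - {2,3} - R) - {c}) < card (U \<inter> ({1..d} - {2,3} - R))"
    using fin c U(1) by (intro card_Diff1_less) auto
  ultimately show ?thesis using walk by (simp add: weight_def U1 U2)
qed

lemma detour_walk:
  assumes R: "\<rho> \<in> R" "even (card R)"
    and U: "U \<subseteq> {1..d}" "odd (card U)" "{2,3} \<union> R \<subseteq> U"
    and c: "c \<in> U" "c \<notin> {2,3} \<union> R" and h: "h \<in> {1..d}" "h \<notin> U" "h \<notin> {2,3} \<union> R"
  shows "odd_walk d p U [h, 2, \<rho>, c] \<and> weight d R (walk_end U [h, 2, \<rho>, c]) < weight d R U"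
proof -
  define U1 U2 U3 where "U1 = insert h U" and "U2 = U1 - {2}" and "U3 = U2 - {\<rho>}"
  have fin: "finite U" using U(1) by (rule finite_subset) simp
  have PR: "{2,3} \<inter> R = {}" and \<rho>: "\<rho> \<notin> {2,3}" using R(1) twisted_R by auto
  have D: "2 \<in> {1..d}" "\<rho> \<in> {1..d}" "c \<in> {1..d}" "U1 \<subseteq> {1..d}" "U2 \<subseteq> {1..d}" "U3 \<subseteq> {1..d}"
    using U R(1) c(1) h(1) unfolding U1_def U2_def U3_def by auto
  have steps: "sym_diff U {h} = U1" "sym_diff U1 {2} = U2" "sym_diff U2 {\<rho>} = U3" "sym_diff U3 {c} = U3 - {c}"
    using U(3) R(1) \<rho> c h unfolding U1_def U2_def U3_def by auto
  have "card U \<ge> 3"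
  proof -
    have "card {2,3,c} \<le> card U" using U(3) c(1) fin by (intro card_mono) auto
    then show ?thesis using c(2) by simp
  qed
  have cards: "card U1 = Suc (card U)" "card U2 = card U" "card U3 = card U - 1"
    using fin U(3) R(1) \<rho> h(2) unfolding U1_def U2_def U3_def by auto
  have "U1 \<inter> R = R" "U2 \<inter> {2,3} = {3}" "U2 \<inter> R = R" "c \<in> U3"
    using U(3) c \<rho> h(3) PR R(1) unfolding U1_def U2_def U3_def by auto
  have "form d p (vec_of U) (evec h)"
    using form_vec_of_evec_twisted[OF tw U(1) h(1)] h U(2) by simp
  moreover have "form d p (vec_of U1) (evec 2)"
    using form_vec_of_evec_twisted[OF tw D(4,1)] \<open>U1 \<inter> R = R\<close> cards U(2) R(2) PR
    by (simp add: U1_def U(3)[THEN subsetD])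
  moreover have "form d p (vec_of U2) (evec \<rho>)"
    using form_vec_of_evec_twisted[OF tw D(5,2)] \<open>U2 \<inter> {2,3} = {3}\<close> cards U(2) R(1) \<rho>
    by (simp add: U2_def U1_def U(3)[THEN subsetD])
  moreover have "form d p (vec_of U3) (evec c)"
    using form_vec_of_evec_twisted[OF tw D(6,3)] \<open>c \<in> U3\<close> cards U(2) c(2) \<open>card U \<ge> 3\<close>
    by simp
  ultimately have walk: "odd_walk d p U [h, 2, \<rho>, c]" using D h(1) by (simp add: steps)
  have "card (U3 - {c}) + 2 = card U" using cards \<open>c \<in> U3\<close> \<open>card U \<ge> 3\<close> fin
    unfolding U3_def U2_def U1_def by auto
  moreover have "(U3 - {c}) \<inter> ({1..d} - {2,3} - R) = insert h (U \<inter> ({1..d} - {2,3} - R)) - {c}"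
    using h \<rho> c R(1) unfolding U1_def U2_def U3_def by auto
  moreover have "card (insert h (U \<inter> ({1..d} - {2,3} - R)) - {c}) = card (U \<inter> ({1..d} - {2,3} - R))"
    using fin c h D(3) by (simp add: card_Diff_singleton)
  ultimately show ?thesis using walk by (simp add: weight_def steps)
qed

lemma stuck_covers_23R:
  assumes R: "even (card R)" and U: "U \<subseteq> {1..d}" "odd (card U)" and P: "{2,3} \<subseteq> {1..d}"
    and stuck: "\<forall>b\<in>U. \<not> form d p (vec_of U) (evec b)"
    and noswap: "\<forall>b\<in>({2,3} \<union> R) - U. \<not> form d p (vec_of U) (evec b)"
  shows "{2,3} \<union> R \<subseteq> U"
proof -
  define x y where "x = card (U \<inter> {2,3})" and "y = card (U \<inter> R)"
  have PR: "{2,3} \<inter> R = {}" and RD: "R \<subseteq> {1..d}" using twisted_R by auto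
  have col: "form d p (vec_of U) (evec b) \<longleftrightarrow>
      odd (card U + of_bool (b \<in> U) + of_bool (b \<in> R) * x + of_bool (b \<in> {2,3}) * y)"
    if "b \<in> {1..d}" for b
    using form_vec_of_evec_twisted[OF tw U(1) that] unfolding x_def y_def .
  have P_iff: "b \<in> U \<longleftrightarrow> even y" if "b \<in> {2,3}" for b
    using col[of b] stuck noswap U(2) PR P that by (cases "b \<in> U") auto
  have R_iff: "b \<in> U \<longleftrightarrow> even x" if "b \<in> R" for b
  proof -
    have "b \<notin> {2,3}" "b \<in> {1..d}" using PR RD that by auto
    then show ?thesis using col[of b] stuck noswap U(2) that by (cases "b \<in> U") auto
  qed
  have "even y"
  proof (rule ccontr)
    assume "odd y"
    then have "U \<inter> {2,3} = {}" using P_iff by auto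
    then have "R \<subseteq> U" using R_iff by (auto simp: x_def)
    then have "y = card R" unfolding y_def by (simp add: Int_absorb1)
    then show False using \<open>odd y\<close> R by simp
  qed
  then have "{2,3} \<subseteq> U" using P_iff by auto
  then have "even x" unfolding x_def by (simp add: Int_absorb1)
  then show ?thesis using \<open>{2,3} \<subseteq> U\<close> R_iff by auto
qed

lemma decreasing_walk:
  assumes R: "R \<noteq> {}" "even (card R)" and U: "U \<subseteq> {1..d}"
    and nonker: "\<exists>b\<in>{1..d}. form d p (vec_of U) (evec b)"
    and reducible: "(\<exists>b\<in>U. form d p (vec_of U) (evec b)) \<or> \<not> U \<subseteq> {2,3} \<union> R"
  shows "\<exists>bs. odd_walk d p U bs \<and> bs \<noteq> [] \<and> weight d R (walk_end U bs) < weight d R U"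
proof -
  have fin: "finite U" using U by (rule finite_subset) simp
  have D23R: "{2,3} \<union> R \<subseteq> {1..d}" using R(1) twisted_R by auto
  show ?thesis
  proof (cases "\<exists>b\<in>U. form d p (vec_of U) (evec b)")
    case True
    then obtain b where b: "b \<in> U" "form d p (vec_of U) (evec b)" by blast
    have "card (U - {b}) < card U" using fin b(1) by (rule card_Diff1_less)
    moreover have "card ((U - {b}) \<inter> ({1..d} - {2,3} - R)) \<le> card (U \<inter> ({1..d} - {2,3} - R))"
      using fin by (intro card_mono) auto
    moreover have "sym_diff U {b} = U - {b}" using b(1) by auto
    ultimately show ?thesis using b U by (intro exI[of _ "[b]"]) (auto simp: weight_def)
  next
    case False
    then have stuck: "\<forall>b\<in>U. \<not> form d p (vec_of U) (evec b)" by blast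
    obtain c where c: "c \<in> U" "c \<notin> {2,3} \<union> R" using reducible False by blast
    have "c \<in> {1..d}" using c(1) U by blast
    have "odd (card U)"
      using stuck c(1) form_vec_of_evec_twisted[OF tw U \<open>c \<in> {1..d}\<close>] c(2) by simp
    obtain h where h: "h \<in> {1..d}" "form d p (vec_of U) (evec h)" using nonker by blast
    then have "h \<notin> U" using stuck by blast
    show ?thesis
    proof (cases "\<exists>\<pi>\<in>({2,3} \<union> R) - U. form d p (vec_of U) (evec \<pi>)")
      case True
      then obtain \<pi> where \<pi>: "\<pi> \<in> {2,3} \<union> R" "\<pi> \<notin> U" "form d p (vec_of U) (evec \<pi>)" by blast
      then have "\<pi> \<in> {1..d}" using D23R by blast
      from swap_walk[OF U \<open>odd (card U)\<close> c this \<pi>] show ?thesis by (intro exI[of _ "[\<pi>, c]"]) simp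
    next
      case False
      then have cover: "{2,3} \<union> R \<subseteq> U"
        using stuck_covers_23R[OF R(2) U \<open>odd (card U)\<close> _ stuck] D23R by blast
      then have "h \<notin> {2,3} \<union> R" using \<open>h \<notin> U\<close> by blast
      obtain \<rho> where "\<rho> \<in> R" using R(1) by blast
      from detour_walk[OF this R(2) U \<open>odd (card U)\<close> cover c h(1) \<open>h \<notin> U\<close> \<open>h \<notin> {2,3} \<union> R\<close>]
      show ?thesis by (intro exI[of _ "[h, 2, \<rho>, c]"]) simp
    qed
  qed
qed

lemma evec_notin_kerO_twisted:
  assumes "2 \<le> d" "a \<in> {1..d}"
  shows "evec a \<notin> kerO d p"
proof -
  define b where "b = (if a = 1 then 2 else (1::nat))"
  have "b \<in> {1..d}" "1 \<notin> R" using assms twisted_R unfolding b_def by auto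
  then have "form d p (evec a) (evec b)"
    using assms(2) by (auto simp: form_evec_evec odd_Omega_twisted[OF tw] b_def)
  then show ?thesis using \<open>b \<in> {1..d}\<close> kerO_iff_evec by blast
qed

lemma vec_of_in_Qclosure_twisted:
  assumes R: "R \<noteq> {}" "even (card R)" "card R \<le> 4"
    and exceptional: "\<And>V. V \<subseteq> {2,3} \<union> R \<Longrightarrow> card (V \<inter> {2,3}) = 1 \<Longrightarrow> card (V \<inter> R) = 3
      \<Longrightarrow> Qf d p (vec_of V) \<Longrightarrow> vec_of V \<in> Qclosure d p (evec ` {1..d})"
  shows "U \<subseteq> {1..d} \<Longrightarrow> Qf d p (vec_of U) \<Longrightarrow> \<exists>b\<in>{1..d}. form d p (vec_of U) (evec b)
    \<Longrightarrow> vec_of U \<in> Qclosure d p (evec ` {1..d})"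
proof (induction "weight d R U" arbitrary: U rule: less_induct)
  case less
  show ?case
  proof (cases "U \<subseteq> {2,3} \<union> R \<and> (\<forall>b\<in>U. \<not> form d p (vec_of U) (evec b))")
    case True
    then consider "card U = 1" | "card (U \<inter> {2,3}) = 1 \<and> card (U \<inter> R) = 3"
      using stuck_subset_23R_cases[OF R(3) less.prems(1) _ less.prems(2)] by blast
    then show ?thesis
    proof cases
      case 1
      then obtain b where "U = {b}" by (rule card_1_singletonE)
      then show ?thesis using evec_in_Qclosure less.prems(1) by (simp add: vec_of_def evec_def)
    next
      case 2
      then show ?thesis using exceptional True less.prems(2) by blast
    qed
  next
    case False
    then obtain bs where "odd_walk d p U bs" "bs \<noteq> []" "weight d R (walk_end U bs) < weight d R U"
      using decreasing_walk[OF R(1,2) less.prems(1,3)] by blast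
    then show ?thesis using odd_walk_reduce[OF less.prems(1,2)] less.hyps by blast
  qed
qed

lemma Qclosure_twisted:
  assumes R: "R \<noteq> {}" "even (card R)" "card R \<le> 4"
    and exceptional: "\<And>V. V \<subseteq> {2,3} \<union> R \<Longrightarrow> card (V \<inter> {2,3}) = 1 \<Longrightarrow> card (V \<inter> R) = 3
      \<Longrightarrow> Qf d p (vec_of V) \<Longrightarrow> vec_of V \<in> Qclosure d p (evec ` {1..d})"
  shows "Qclosure d p (evec ` {1..d}) = NS d p - kerO d p"
proof
  have "2 \<le> d" using R(1) twisted_R by auto
  then show "Qclosure d p (evec ` {1..d}) \<subseteq> NS d p - kerO d p"
    by (intro Qclosure_subset_NS_minus_kerO ballI evec_notin_kerO_twisted)
next
  show "NS d p - kerO d p \<subseteq> Qclosure d p (evec ` {1..d})"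
  proof
    fix u assume u: "u \<in> NS d p - kerO d p"
    have u_eq: "vec_of (Collect u) = u" by (simp add: vec_of_def)
    have "Collect u \<subseteq> {1..d}" "Qf d p u" "\<exists>b\<in>{1..d}. form d p u (evec b)"
      using u by (auto simp: NS_def vecs_def kerO_iff_evec)
    then have "vec_of (Collect u) \<in> Qclosure d p (evec ` {1..d})"
      by (intro vec_of_in_Qclosure_twisted[OF R exceptional]) (simp_all only: u_eq)
    then show "u \<in> Qclosure d p (evec ` {1..d})" by (simp only: u_eq)
  qed
qed

end

lemma sigma_exceptional:
  assumes d: "8 \<le> d" and V: "V \<subseteq> {2,3} \<union> {4..<8}" "card (V \<inter> {2,3}) = 1" "card (V \<inter> {4..<8}) = 3"
    and Q: "Qf d (sigma d) (vec_of V)"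
  shows "vec_of V \<in> Qclosure d (sigma d) (evec ` {1..d})"
proof -
  have R: "{4..<8} = {4,5,6,7::nat}" by auto
  obtain \<pi> where \<pi>: "V \<inter> {2,3} = {\<pi>}" using V(2) by (rule card_1_singletonE)
  have "card ({4,5,6,7} - V) = 1"
    using V(3) unfolding R by (simp add: card_Diff_subset_Int Int_commute)
  then obtain z where z: "{4,5,6,7} - V = {z}" by (rule card_1_singletonE)
  have V_eq: "V = insert \<pi> ({4,5,6,7} - {z})" and "\<pi> \<in> {2,3}" "z \<in> {4,5,6,7}"
    using V(1) \<pi> z unfolding R by blast+
  \<comment> \<open>Writing V = {\<pi>, r1, r2, r3} with r1 < r2 < r3: add the other letter of {2,3} and
    the letters 1 and 8, then remove all letters except 8.\<close>
  define bs where "bs = [5 - \<pi>, 1, if z = 4 then 5 else 4, 8, 2, if z \<le> 5 then 6 else 5, 1, 3,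
    if z = 7 then 6 else 7]"
  have tw: "twisted d (sigma d) {4,5,6,7}"
    using twisted_twist_perm[of 8 d] d unfolding sigma_eq_twist_perm R by simp
  have "odd_walk d (sigma d) V bs \<and> walk_end V bs = {8}"
    using \<open>\<pi> \<in> {2,3}\<close> \<open>z \<in> {4,5,6,7}\<close> d unfolding V_eq bs_def
    by (elim insertE emptyE) (simp_all add: form_vec_of_evec_twisted[OF tw] insert_Diff_if)
  then show ?thesis using odd_walk_to_singleton[OF Q] d by auto
qed

theorem lemma4p7:
  fixes d :: nat and p :: perm2
  assumes "(p = tau d \<and> d \<ge> 6) \<or> (p = sigma d \<and> d \<ge> 8)"
  shows "Qclosure d p (evec ` {1..d}) = NS d p - kerO d p"
  using assms
proof (elim disjE conjE)
  assume p: "p = tau d" and d: "6 \<le> d"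
  have small: "card (V \<inter> {4..<6}) \<noteq> 3" for V :: "nat set"
    using card_mono[of "{4..<6::nat}" "V \<inter> {4..<6}"] by auto
  have "twisted d p {4..<6}"
    unfolding p tau_eq_twist_perm using d by (intro twisted_twist_perm) auto
  then show ?thesis by (rule Qclosure_twisted) (use small in auto)
next
  assume p: "p = sigma d" and d: "8 \<le> d"
  have "twisted d p {4..<8}"
    unfolding p sigma_eq_twist_perm using d by (intro twisted_twist_perm) auto
  then show ?thesis by (rule Qclosure_twisted) (use sigma_exceptional d p in auto)
qed

end
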